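(* (Liveness of YAC.) Consider a network of $n = 3f+1$ validating peers running the YAC consensus protocol, of which at most $f$ are faulty (Byzantine), under the standing assumptions listed in the context. Then every correct (valid) client transaction is eventually committed by the honest peers.
   Context: YAC protocol. There are $n=3f+1$ validating peers with a fixed initial ordered list. Rounds $r=1,2,\dots$: in round $r$ the peer processes the $r$-th proposal. The round starts when the peer begins processing the proposal and ends when it commits a block. An Ordering Service (OS) collects client transactions and broadcasts a proposal, an ordered list of transactions, to all peers. Each peer validates the proposal against its local state and discards invalid transactions. From the remaining transactions, the proposal hash and metadata, it forms a block and computes the block hash. A vote is a message containing the pair (proposal hash, block hash) and the peer's signature. Each peer computes a permutation of the peers using a pure function of the block hash and the initial peer list whose output lists are uniformly distributed. It sends its vote to the peers in that order, waiting a fixed delay between sends and cycling through the order repeatedly (vote steps), until it receives a valid commit or reject message. A supermajority is any number greater than two thirds of all peers. A commit message is a set of votes for one block hash signed by a supermajority of peers. A peer that collects a supermajority of votes for one hash broadcasts the commit message and commits the block. A reject message is a set of votes proving that no block hash can reach a supermajority. Commit forwarding: if a peer that has already committed receives a vote for that round, it sends the commit message directly to the voter. An honest peer is one that tries to synchronize with the network, creates valid votes and commits, and never creates forks. Standing assumptions: (i) The OS is itself Byzantine fault tolerant and orders transactions honestly. Every valid client transaction eventually appears in some proposal, and every proposal is delivered to all peers. (ii) Asynchronous environment: every message successfully sent is eventually received. (iii) Hashes and digital signatures are cryptographically secure, and messages cannot be altered or forged by adversaries. (iv) The reject case does not occur; its occurrence is regarded as a violation of the BFT assumption. *)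

theory Defs
  imports Main
begin

text \<open>Rounds are numbered 1,2,...; props r is the r-th proposal
  broadcast by the (BFT, honest) ordering service. A message is a triple
  (source, destination, payload). cm t p r = Some h means that at time t peer p
  has committed (in round r) the block with hash h.\<close>

datatype ('p, 'h) msg =
    Vote nat 'h
  | Commit nat 'h "'p set"   \<comment> \<open>commit message: the votes for (r,h) signed by the peers in the set\<close>

type_synonym ('p, 'h) net = "nat \<Rightarrow> ('p \<times> 'p \<times> ('p, 'h) msg) set"

definition yac_block :: "('t \<Rightarrow> bool) \<Rightarrow> (nat \<Rightarrow> 't list) \<Rightarrow> nat \<Rightarrow> 't list" where
  "yac_block valid props r = filter valid (props r)"

definition supermajority :: "'p set \<Rightarrow> 'p set \<Rightarrow> bool" where
  "supermajority P V \<longleftrightarrow> V \<subseteq> P \<and> 3 * card V > 2 * card P"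

text \<open>Signatures cannot be forged (assumption (iii)): an honest
  (non-faulty) signer's vote for (r,h) exists only if that peer actually sent it.\<close>
definition valid_commit ::
  "'p set \<Rightarrow> 'p set \<Rightarrow> ('p, 'h) net \<Rightarrow> nat \<Rightarrow> 'h \<Rightarrow> 'p set \<Rightarrow> bool" where
  "valid_commit P F sent r h V \<longleftrightarrow>
     supermajority P V \<and> (\<forall>v \<in> V - F. \<exists>t q. (v, q, Vote r h) \<in> sent t)"

definition os_assumption :: "('t \<Rightarrow> bool) \<Rightarrow> (nat \<Rightarrow> 't list) \<Rightarrow> bool" where
  "os_assumption valid props \<longleftrightarrow> (\<forall>x. valid x \<longrightarrow> (\<exists>r\<ge>1. x \<in> set (props r)))"

definition reliable_delivery :: "('p, 'h) net \<Rightarrow> ('p, 'h) net \<Rightarrow> bool" where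
  "reliable_delivery sent rcvd \<longleftrightarrow>
     (\<forall>t a b m. (a, b, m) \<in> sent t \<longrightarrow> (\<exists>t'\<ge>t. (a, b, m) \<in> rcvd t'))"

definition no_forgery :: "('p, 'h) net \<Rightarrow> ('p, 'h) net \<Rightarrow> bool" where
  "no_forgery sent rcvd \<longleftrightarrow>
     (\<forall>t a b m. (a, b, m) \<in> rcvd t \<longrightarrow> (\<exists>t'\<le>t. (a, b, m) \<in> sent t'))"

text \<open>Peer p has started (is processing) round r at time t: round 1 is processed from the
  start, round r+1 once round r has been committed (the proposal is delivered by the OS).\<close>
definition started :: "(nat \<Rightarrow> 'p \<Rightarrow> nat \<Rightarrow> 'h option) \<Rightarrow> nat \<Rightarrow> 'p \<Rightarrow> nat \<Rightarrow> bool" where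
  "started cm t p r \<longleftrightarrow> r = 1 \<or> (r > 1 \<and> cm t p (r - 1) \<noteq> None)"

definition yac_honest ::
  "'p set \<Rightarrow> 'p set \<Rightarrow> ('t \<Rightarrow> bool) \<Rightarrow> (nat \<Rightarrow> 't list) \<Rightarrow> ('t list \<Rightarrow> 'h)
   \<Rightarrow> ('p, 'h) net \<Rightarrow> ('p, 'h) net \<Rightarrow> (nat \<Rightarrow> 'p \<Rightarrow> nat \<Rightarrow> 'h option) \<Rightarrow> bool" where
  "yac_honest P F valid props hsh sent rcvd cm \<longleftrightarrow>
     \<comment> \<open>commits are final (no forks)\<close>
     (\<forall>p \<in> P - F. \<forall>t t' r h. t \<le> t' \<longrightarrow> cm t p r = Some h \<longrightarrow> cm t' p r = Some h) \<and>
     \<comment> \<open>honest votes are valid: for the hash of the block formed from the proposal\<close>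
     (\<forall>p \<in> P - F. \<forall>t q r h. (p, q, Vote r h) \<in> sent t \<longrightarrow> h = hsh (yac_block valid props r)) \<and>
     \<comment> \<open>vote steps: while not committed, the peer keeps sending its vote to every peer,
         cycling through the peer list repeatedly\<close>
     (\<forall>p \<in> P - F. \<forall>q \<in> P. \<forall>r t. started cm t p r \<longrightarrow> cm t p r = None \<longrightarrow>
        (\<exists>t'\<ge>t. (p, q, Vote r (hsh (yac_block valid props r))) \<in> sent t' \<or> cm t' p r \<noteq> None)) \<and>
     \<comment> \<open>collecting a supermajority of votes for one hash leads to a commit\<close>
     (\<forall>p \<in> P - F. \<forall>r t h V. started cm t p r \<longrightarrow> supermajority P V \<longrightarrow>
        (\<forall>v \<in> V. \<exists>t'\<le>t. (v, p, Vote r h) \<in> rcvd t') \<longrightarrow> (\<exists>t'\<ge>t. cm t' p r \<noteq> None)) \<and>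
     \<comment> \<open>receiving a valid commit message leads to a commit\<close>
     (\<forall>p \<in> P - F. \<forall>q r h V t. (q, p, Commit r h V) \<in> rcvd t \<longrightarrow> valid_commit P F sent r h V \<longrightarrow>
        (\<exists>t'\<ge>t. cm t' p r \<noteq> None)) \<and>
     \<comment> \<open>honest commits are justified by a valid commit message\<close>
     (\<forall>p \<in> P - F. \<forall>t r h. cm t p r = Some h \<longrightarrow> (\<exists>V. valid_commit P F sent r h V)) \<and>
     \<comment> \<open>commit forwarding: a vote received after committing is answered with the commit message\<close>
     (\<forall>p \<in> P - F. \<forall>q r h h' t t'. cm t p r = Some h \<longrightarrow> t \<le> t' \<longrightarrow> (q, p, Vote r h') \<in> rcvd t' \<longrightarrow>
        (\<exists>t''\<ge>t'. \<exists>V. valid_commit P F sent r h V \<and> (p, q, Commit r h V) \<in> sent t''))"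

end

theory Submission
  imports Defs
begin

(* Since fewer than a third of the peers are faulty, the honest peers alone form a
   supermajority, and every supermajority contains an honest peer. The second fact makes
   every honest commit a commit of the block formed from the proposal, because an honest
   signer only votes for that block. The first gives progress, round by round: once all
   honest peers have started round r, either some honest peer commits, and then every
   other honest peer's vote reaches it after the commit and is answered by commit
   forwarding, or no honest peer ever commits, and then every honest peer keeps voting
   until some honest peer has received a supermajority of votes, which forces a commit
   after all. *)

lemma supermajority_Diff:
  assumes "finite P" and "F \<subseteq> P" and "3 * card F < card P"
  shows "supermajority P (P - F)"
  using assms card_Diff_subset[of F P] card_mono[of P F] finite_subset[of F P]
  unfolding supermajority_def by auto

lemma supermajority_not_subset:
  assumes "finite P" and "F \<subseteq> P" and "3 * card F < card P" and "supermajority P V"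
  shows "\<not> V \<subseteq> F"
proof
  assume "V \<subseteq> F"
  then have "card V \<le> card F"
    using assms(1,2) finite_subset card_mono by blast
  then show False
    using assms(3,4) unfolding supermajority_def by linarith
qed

locale yac_run =
  fixes P F :: "'p set"
    and valid :: "'t \<Rightarrow> bool" and props :: "nat \<Rightarrow> 't list" and hsh :: "'t list \<Rightarrow> 'h"
    and sent rcvd :: "('p, 'h) net" and cm :: "nat \<Rightarrow> 'p \<Rightarrow> nat \<Rightarrow> 'h option"
  assumes finite_peers: "finite P"
    and faulty_subset: "F \<subseteq> P"
    and byzantine_bound: "3 * card F < card P"
    and delivery: "reliable_delivery sent rcvd"
    and honest: "yac_honest P F valid props hsh sent rcvd cm"
begin

abbreviation block_hash :: "nat \<Rightarrow> 'h" where
  "block_hash r \<equiv> hsh (yac_block valid props r)"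

lemma delivered:
  "(a, b, m) \<in> sent t \<Longrightarrow> \<exists>t'\<ge>t. (a, b, m) \<in> rcvd t'"
  using delivery unfolding reliable_delivery_def by blast

lemma commit_stable:
  "p \<in> P - F \<Longrightarrow> cm t p r = Some h \<Longrightarrow> t \<le> t' \<Longrightarrow> cm t' p r = Some h"
  using honest unfolding yac_honest_def by simp

lemma honest_vote_hash:
  "p \<in> P - F \<Longrightarrow> (p, q, Vote r h) \<in> sent t \<Longrightarrow> h = block_hash r"
  using honest unfolding yac_honest_def by simp

lemma vote_step:
  "p \<in> P - F \<Longrightarrow> q \<in> P \<Longrightarrow> started cm t p r \<Longrightarrow> cm t p r = None \<Longrightarrow>
   \<exists>t'\<ge>t. (p, q, Vote r (block_hash r)) \<in> sent t' \<or> cm t' p r \<noteq> None"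
  using honest unfolding yac_honest_def by simp

lemma commit_on_votes:
  "p \<in> P - F \<Longrightarrow> started cm t p r \<Longrightarrow> supermajority P V \<Longrightarrow>
   \<forall>v \<in> V. \<exists>t'\<le>t. (v, p, Vote r h) \<in> rcvd t' \<Longrightarrow> \<exists>t'\<ge>t. cm t' p r \<noteq> None"
  using honest unfolding yac_honest_def by simp

lemma commit_on_commit_msg:
  "p \<in> P - F \<Longrightarrow> (q, p, Commit r h V) \<in> rcvd t \<Longrightarrow> valid_commit P F sent r h V \<Longrightarrow>
   \<exists>t'\<ge>t. cm t' p r \<noteq> None"
  using honest unfolding yac_honest_def by simp

lemma commit_justified:
  "p \<in> P - F \<Longrightarrow> cm t p r = Some h \<Longrightarrow> \<exists>V. valid_commit P F sent r h V"
  using honest unfolding yac_honest_def by simp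

lemma commit_forwarding:
  "p \<in> P - F \<Longrightarrow> cm t p r = Some h \<Longrightarrow> t \<le> t' \<Longrightarrow> (q, p, Vote r h') \<in> rcvd t' \<Longrightarrow>
   \<exists>t''\<ge>t'. \<exists>V. valid_commit P F sent r h V \<and> (p, q, Commit r h V) \<in> sent t''"
  using honest unfolding yac_honest_def by simp

lemma honest_commit_hash:
  assumes "p \<in> P - F" and "cm t p r = Some h"
  shows "h = block_hash r"
proof -
  obtain V where V: "valid_commit P F sent r h V"
    using commit_justified assms by blast
  then have "\<not> V \<subseteq> F"
    using supermajority_not_subset finite_peers faulty_subset byzantine_bound
    unfolding valid_commit_def by blast
  then obtain v where v: "v \<in> V - F" by blast
  then obtain t' q where "(v, q, Vote r h) \<in> sent t'"
    using V unfolding valid_commit_def by blast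
  moreover have "v \<in> P - F"
    using v V unfolding valid_commit_def supermajority_def by blast
  ultimately show ?thesis
    using honest_vote_hash by blast
qed

lemma started_mono:
  assumes "p \<in> P - F" and "started cm t p r" and "t \<le> t'"
  shows "started cm t' p r"
  using assms commit_stable unfolding started_def by blast

lemma vote_received_or_commit:
  assumes "p \<in> P - F" and "q \<in> P" and "started cm t p r"
  shows "(\<exists>t'\<ge>t. cm t' p r \<noteq> None) \<or> (\<exists>t'\<ge>t. (p, q, Vote r (block_hash r)) \<in> rcvd t')"
proof (cases "cm t p r = None")
  case True
  then show ?thesis
    using vote_step[OF assms True] delivered by (meson order_trans)
qed blast

lemma all_started_eventually:
  assumes "\<forall>p \<in> P - F. \<exists>t. started cm t p r"
  obtains T where "\<And>t p. T \<le> t \<Longrightarrow> p \<in> P - F \<Longrightarrow> started cm t p r"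
proof -
  obtain ts where ts: "\<forall>p \<in> P - F. started cm (ts p) p r"
    using assms by metis
  obtain T where "\<forall>p \<in> P - F. ts p \<le> T"
    using finite_nat_set_iff_bounded_le[of "ts ` (P - F)"] finite_peers by auto
  then show thesis
    using that ts started_mono by (meson order_trans)
qed

lemma commit_after_honest_commit:
  assumes p: "p \<in> P - F" and "started cm t p r"
    and q: "q \<in> P - F" and "cm t\<^sub>0 q r = Some h"
  shows "\<exists>t'. cm t' p r \<noteq> None"
proof -
  have "started cm (max t t\<^sub>0) p r"
    using started_mono assms by simp
  then consider "\<exists>t'. cm t' p r \<noteq> None"
    | t\<^sub>1 where "t\<^sub>0 \<le> t\<^sub>1" "(p, q, Vote r (block_hash r)) \<in> rcvd t\<^sub>1"
    using vote_received_or_commit[OF p] q by fastforce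
  then show ?thesis
  proof cases
    case 2
    then obtain t\<^sub>2 V where "valid_commit P F sent r h V" "(q, p, Commit r h V) \<in> sent t\<^sub>2"
      using commit_forwarding q \<open>cm t\<^sub>0 q r = Some h\<close> by blast
    then show ?thesis
      using delivered commit_on_commit_msg p by blast
  qed
qed

lemma some_honest_commits:
  assumes p: "p \<in> P - F" and started: "\<forall>v \<in> P - F. \<exists>t. started cm t v r"
  shows "\<exists>q \<in> P - F. \<exists>t. cm t q r \<noteq> None"
proof (rule ccontr)
  assume no_commit: "\<not> ?thesis"
  obtain T where T: "\<And>t v. T \<le> t \<Longrightarrow> v \<in> P - F \<Longrightarrow> started cm t v r"
    using all_started_eventually started by blast
  have "\<forall>v \<in> P - F. \<exists>t. (v, p, Vote r (block_hash r)) \<in> rcvd t"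
    using vote_received_or_commit T no_commit p by blast
  then obtain arrival where arrival: "\<forall>v \<in> P - F. (v, p, Vote r (block_hash r)) \<in> rcvd (arrival v)"
    by metis
  obtain T' where T': "\<forall>v \<in> P - F. arrival v \<le> T'"
    using finite_nat_set_iff_bounded_le[of "arrival ` (P - F)"] finite_peers by auto
  have "\<exists>t'\<ge>max T T'. cm t' p r \<noteq> None"
  proof (rule commit_on_votes[OF p])
    show "started cm (max T T') p r"
      using T p by simp
    show "supermajority P (P - F)"
      using supermajority_Diff finite_peers faulty_subset byzantine_bound .
    show "\<forall>v \<in> P - F. \<exists>t'\<le>max T T'. (v, p, Vote r (block_hash r)) \<in> rcvd t'"
      using arrival T' by (meson max.coboundedI2)
  qed
  then show False
    using no_commit p by blast
qed

lemma every_honest_commits: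
  assumes "\<forall>p \<in> P - F. \<exists>t. started cm t p r" and "p \<in> P - F"
  shows "\<exists>t. cm t p r \<noteq> None"
proof -
  obtain q t\<^sub>0 h where "q \<in> P - F" "cm t\<^sub>0 q r = Some h"
    using some_honest_commits assms by blast
  moreover obtain t where "started cm t p r"
    using assms by blast
  ultimately show ?thesis
    using commit_after_honest_commit assms(2) by blast
qed

lemma honest_commit_round:
  assumes "r \<ge> 1" and "p \<in> P - F"
  shows "\<exists>t. cm t p r = Some (block_hash r)"
proof -
  have "\<forall>p \<in> P - F. \<exists>t. cm t p r \<noteq> None"
    using assms(1)
  proof (induction r rule: dec_induct)
    case base
    then show ?case
      using every_honest_commits by (simp add: started_def)
  next
    case (step n)
    then show ?case
      using every_honest_commits by (simp add: started_def)
  qed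
  then show ?thesis
    using assms(2) honest_commit_hash by fastforce
qed

end

theorem lemma2:
  fixes P F :: "'p set" and f :: nat
    and valid :: "'t \<Rightarrow> bool" and props :: "nat \<Rightarrow> 't list" and hsh :: "'t list \<Rightarrow> 'h"
    and sent rcvd :: "('p, 'h) net" and cm :: "nat \<Rightarrow> 'p \<Rightarrow> nat \<Rightarrow> 'h option"
    and tx :: 't
  assumes "finite P" and "card P = 3 * f + 1"
    and "F \<subseteq> P" and "card F \<le> f"
    and "os_assumption valid props"
    and "inj hsh"
    and "reliable_delivery sent rcvd"
    and "no_forgery sent rcvd"
    and "yac_honest P F valid props hsh sent rcvd cm"
    and "valid tx"
  shows "\<exists>r\<ge>1. tx \<in> set (yac_block valid props r) \<and>
           (\<forall>p \<in> P - F. \<exists>t. cm t p r = Some (hsh (yac_block valid props r)))"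
proof -
  interpret yac_run P F valid props hsh sent rcvd cm
    using assms by unfold_locales auto
  obtain r where "r \<ge> 1" "tx \<in> set (props r)"
    using assms(5,10) unfolding os_assumption_def by blast
  then show ?thesis
    using assms(10) honest_commit_round by (auto simp: yac_block_def)
qed

end
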